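(* Let $(X_n,\eta_n)$ be a time-homogeneous Markov chain on a locally finite set $\Sigma\subseteq\mathbb{R}_+\times S$ ($S$ finite), and suppose that for some $p>2$ there is $C_p<\infty$ with $\mathbb{E}_{x,i}[|X_{n+1}-X_n|^p]\le C_p$ for all $(x,i)\in\Sigma$. Let $b_i\in\mathbb{R}$, $i\in S$, and let $f_r$ be as in the context. Then for any $r\in(2-p,p]$ one can choose $\zeta\in(0,1)$ such that, with $E_n=\{|X_{n+1}-X_n|\le X_n^\zeta\}$, as $x\to\infty$, \[\mathbb{E}_{x,i}\big[|f_r(X_{n+1},\eta_{n+1})-f_r(X_n,\eta_n)|\mathbf 1(E_n^c)\big]=o(x^{r-2}).\]
   Context: $\mathbb{E}_{x,i}[\cdot]=\mathbb{E}[\cdot\mid X_n=x,\eta_n=i]$; $E_n^c$ is the complement of $E_n$. For $r\in\mathbb{R}$, $x_0:=1+\sqrt{|r|\max_i|b_i|}$ and $f_r(x,i)=x^r+\frac r2b_ix^{r-2}$ for $x\ge x_0$, $f_r(x,i)=x_0^r+\frac r2b_ix_0^{r-2}$ for $x<x_0$. *)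

theory Defs
  imports "HOL-Probability.Probability"
begin

definition x0_thr :: "real \<Rightarrow> 'a set \<Rightarrow> ('a \<Rightarrow> real) \<Rightarrow> real" where
  "x0_thr r S b = 1 + sqrt (\<bar>r\<bar> * Max ((\<lambda>i. \<bar>b i\<bar>) ` S))"

definition f_r :: "real \<Rightarrow> 'a set \<Rightarrow> ('a \<Rightarrow> real) \<Rightarrow> real \<Rightarrow> 'a \<Rightarrow> real" where
  "f_r r S b x i = (let x0 = x0_thr r S b in
     if x \<ge> x0 then x powr r + r / 2 * b i * x powr (r - 2)
     else x0 powr r + r / 2 * b i * x0 powr (r - 2))"

definition locally_finite_state_space :: "(real \<times> 'a) set \<Rightarrow> 'a set \<Rightarrow> bool" where
  "locally_finite_state_space \<Sigma> S \<longleftrightarrow> finite S \<and> \<Sigma> \<subseteq> {0..} \<times> S \<and>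
     (\<forall>a. finite (\<Sigma> \<inter> ({..a} \<times> S)))"

end

theory Submission
  imports Defs
begin

text \<open>Above the threshold \<open>x\<^sub>0\<close> the function \<open>f\<^sub>r\<close> grows at most like \<open>K y\<^sup>q\<close> with
  \<open>q = max r 0\<close>. On the event of a jump of size \<open>D > x\<^sup>\<zeta>\<close>, both \<open>x\<^sup>q\<close> and \<open>D\<^sup>q\<close> can be traded
  for \<open>D\<^sup>p\<close>, so the increment of \<open>f\<^sub>r\<close> is at most \<open>D\<^sup>p (x\<^bsup>q - \<zeta>p\<^esup> + x\<^bsup>\<zeta>(q - p)\<^esup>)\<close> up to
  constants. Integrating against the \<open>p\<close>-th moment bound, it remains to choose \<open>\<zeta> < 1\<close> so
  large that both exponents lie below \<open>r - 2\<close>, which is possible because \<open>2 - p < r \<le> p\<close>.\<close>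

definition f_r_growth_const :: "real \<Rightarrow> 'a set \<Rightarrow> ('a \<Rightarrow> real) \<Rightarrow> real" where
  "f_r_growth_const r S b = 1 + \<bar>r\<bar> * Max ((\<lambda>i. \<bar>b i\<bar>) ` S) / 2"

lemma Max_abs_nonneg:
  fixes b :: "'a \<Rightarrow> real"
  assumes "finite S" "S \<noteq> {}"
  shows "0 \<le> Max ((\<lambda>i. \<bar>b i\<bar>) ` S)"
  using assms by (auto simp: Max_ge_iff)

lemma x0_thr_ge_1:
  assumes "finite S" "S \<noteq> {}"
  shows "x0_thr r S b \<ge> 1"
  using Max_abs_nonneg[OF assms] unfolding x0_thr_def by simp

lemma f_r_growth_const_nonneg:
  assumes "finite S" "S \<noteq> {}"
  shows "f_r_growth_const r S b \<ge> 0"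
  using Max_abs_nonneg[OF assms] unfolding f_r_growth_const_def by simp

lemma abs_f_r_le:
  assumes fin: "finite S" and j: "j \<in> S"
  shows "\<bar>f_r r S b y j\<bar> \<le> f_r_growth_const r S b * (max y (x0_thr r S b)) powr (max r 0)"
proof -
  define B where "B = Max ((\<lambda>i. \<bar>b i\<bar>) ` S)"
  define z where "z = max y (x0_thr r S b)"
  have z1: "z \<ge> 1" using x0_thr_ge_1[OF fin, of r b] j by (force simp: z_def)
  have bj: "\<bar>b j\<bar> \<le> B" unfolding B_def using fin j by auto
  have f: "f_r r S b y j = z powr r + r / 2 * b j * z powr (r - 2)"
    by (simp add: f_r_def z_def Let_def max_def)
  have "\<bar>f_r r S b y j\<bar> \<le> z powr r + \<bar>r\<bar> / 2 * \<bar>b j\<bar> * z powr (r - 2)"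
    unfolding f using abs_triangle_ineq[of "z powr r" "r / 2 * b j * z powr (r - 2)"]
    by (simp add: abs_mult)
  also have "\<dots> \<le> z powr r + \<bar>r\<bar> / 2 * B * z powr r"
    using z1 bj by (intro add_left_mono mult_mono powr_mono) simp_all
  also have "\<dots> = f_r_growth_const r S b * z powr r"
    by (simp add: f_r_growth_const_def B_def algebra_simps)
  also have "\<dots> \<le> f_r_growth_const r S b * z powr (max r 0)"
    using z1 f_r_growth_const_nonneg[OF fin] j by (intro mult_left_mono powr_mono) auto
  finally show ?thesis unfolding z_def .
qed

lemma abs_diff_le_of_large_jump:
  fixes x y D \<zeta> q p K M fy fx :: real
  assumes xM: "x \<ge> M" and M1: "M \<ge> 1" and D: "D = \<bar>y - x\<bar>" and jump: "D > x powr \<zeta>"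
    and q: "0 \<le> q" "q \<le> p" and K: "K \<ge> 0"
    and fy: "\<bar>fy\<bar> \<le> K * (max y M) powr q" and fx: "\<bar>fx\<bar> \<le> K * (max x M) powr q"
  shows "\<bar>fy - fx\<bar>
    \<le> (K * (2 powr q + 1) * x powr (q - \<zeta> * p) + K * 2 powr q * x powr (\<zeta> * (q - p))) * D powr p"
proof -
  have x0: "x > 0" using xM M1 by simp
  have xz: "x powr \<zeta> > 0" using x0 by simp
  have D0: "D > 0" using jump xz by linarith
  have "(max y M) powr q \<le> (2 * max x D) powr q"
    using D xM M1 q by (intro powr_mono2) (auto simp: max_def abs_if)
  also have "\<dots> \<le> 2 powr q * (x powr q + D powr q)"
    using x0 D0 by (auto simp: powr_mult max_def)
  finally have "\<bar>fy - fx\<bar> \<le> K * (2 powr q * (x powr q + D powr q)) + K * x powr q"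
    using fy fx K xM by (smt (verit) mult_left_mono)
  also have "\<dots> = K * (2 powr q + 1) * x powr q + K * 2 powr q * D powr q"
    by (simp add: algebra_simps)
  also have "\<dots> \<le> K * (2 powr q + 1) * (x powr (q - \<zeta> * p) * D powr p)
                 + K * 2 powr q * (x powr (\<zeta> * (q - p)) * D powr p)"
  proof (intro add_mono mult_left_mono)
    have "x powr (\<zeta> * p) \<le> D powr p"
      using powr_mono2[of p "x powr \<zeta>" D] jump xz q by (simp add: powr_powr)
    from mult_left_mono[OF this, of "x powr (q - \<zeta> * p)"]
    show "x powr q \<le> x powr (q - \<zeta> * p) * D powr p"
      by (simp add: powr_add[symmetric])
    have "D powr (q - p) \<le> x powr (\<zeta> * (q - p))"
      using powr_mono2'[of "q - p" "x powr \<zeta>" D] q xz jump by (simp add: powr_powr)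
    from mult_right_mono[OF this, of "D powr p"]
    show "D powr q \<le> x powr (\<zeta> * (q - p)) * D powr p"
      by (simp add: powr_add[symmetric])
  qed (use K in auto)
  finally show ?thesis by (simp add: algebra_simps)
qed

lemma exists_jump_exponent:
  fixes p q r :: real
  assumes "0 \<le> q" "0 < p" "q + 2 - r < p"
  shows "\<exists>\<zeta>. 0 < \<zeta> \<and> \<zeta> < 1 \<and> q - \<zeta> * p < r - 2 \<and> \<zeta> * (q - p) < r - 2"
proof -
  define z where "z = (q + 2 - r) / p"
  define \<zeta> where "\<zeta> = (max z 0 + 1) / 2"
  have "z < 1" using assms by (simp add: z_def divide_less_eq)
  then have \<zeta>: "0 < \<zeta>" "\<zeta> < 1" "z < \<zeta>" by (auto simp: \<zeta>_def)
  then have "q + 2 - r < \<zeta> * p" using assms by (simp add: z_def divide_less_eq)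
  \<comment> \<open>the second exponent bound follows from the first because \<open>(1 - \<zeta>) q \<ge> 0\<close>\<close>
  moreover have "0 \<le> (1 - \<zeta>) * q" using \<zeta> assms by simp
  ultimately show ?thesis using \<zeta> by (intro exI[of _ \<zeta>]) (auto simp: algebra_simps)
qed

lemma powr_sum_le_eventually:
  fixes A1 A2 a1 a2 c \<epsilon> :: real
  assumes "a1 < c" "a2 < c" "A1 \<ge> 0" "A2 \<ge> 0" "\<epsilon> > 0"
  shows "\<exists>x1. \<forall>x\<ge>x1. A1 * x powr a1 + A2 * x powr a2 \<le> \<epsilon> * x powr c"
proof -
  have t: "((\<lambda>x. A * x powr (a - c)) \<longlongrightarrow> 0) at_top" if "a < c" for A a
    using that by (intro tendsto_mult_right_zero tendsto_neg_powr filterlim_ident) simp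
  have "eventually (\<lambda>x. A1 * x powr (a1 - c) < \<epsilon>/2 \<and> A2 * x powr (a2 - c) < \<epsilon>/2 \<and> x > 0) at_top"
    using assms by (intro eventually_conj order_tendstoD(2)[OF t] eventually_gt_at_top; simp)
  then obtain x1 where x1: "\<And>x. x \<ge> x1 \<Longrightarrow>
      A1 * x powr (a1 - c) < \<epsilon>/2 \<and> A2 * x powr (a2 - c) < \<epsilon>/2 \<and> x > 0"
    by (auto simp: eventually_at_top_linorder)
  have "A1 * x powr a1 + A2 * x powr a2 \<le> \<epsilon> * x powr c" if "x \<ge> x1" for x
  proof -
    have x: "x > 0" using x1[OF that] by auto
    have split: "A * x powr a = (A * x powr (a - c)) * x powr c" for A a
      using x by (simp add: powr_diff)
    have "A * x powr a \<le> \<epsilon>/2 * x powr c" if "A * x powr (a - c) < \<epsilon>/2" for A a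
      using mult_right_mono[of "A * x powr (a - c)" "\<epsilon>/2" "x powr c"] that by (simp add: split[of A a])
    from this[of A1 a1] this[of A2 a2] x1[OF that] show ?thesis by simp
  qed
  then show ?thesis by blast
qed

lemma eventually_ennreal_le_of_powr_bound:
  fixes I :: "real \<Rightarrow> 'i \<Rightarrow> ennreal"
  assumes bound: "\<And>x i. (x, i) \<in> \<Sigma> \<Longrightarrow> x \<ge> x0 \<Longrightarrow> I x i \<le> ennreal (A1 * x powr a1 + A2 * x powr a2)"
    and "a1 < c" "a2 < c" "A1 \<ge> 0" "A2 \<ge> 0"
  shows "\<forall>\<epsilon>>0. \<exists>x1. \<forall>x i. (x, i) \<in> \<Sigma> \<and> x \<ge> x1 \<longrightarrow> I x i \<le> ennreal (\<epsilon> * x powr c)"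
proof (intro allI impI)
  fix \<epsilon> :: real assume "\<epsilon> > 0"
  then obtain x1 where x1: "\<And>x. x \<ge> x1 \<Longrightarrow> A1 * x powr a1 + A2 * x powr a2 \<le> \<epsilon> * x powr c"
    using powr_sum_le_eventually assms(2-5) by blast
  have "I x i \<le> ennreal (\<epsilon> * x powr c)" if "(x, i) \<in> \<Sigma>" "x \<ge> max x0 x1" for x i
    using bound[of x i] x1[of x] that by (auto intro: order.trans ennreal_leI)
  then show "\<exists>x1. \<forall>x i. (x, i) \<in> \<Sigma> \<and> x \<ge> x1 \<longrightarrow> I x i \<le> ennreal (\<epsilon> * x powr c)"
    by blast
qed

lemma large_jump_nn_integral_le:
  fixes P :: "(real \<times> 'a) pmf"
  assumes fin: "finite S" and i: "i \<in> S" and supp: "snd ` set_pmf P \<subseteq> S"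
    and x: "x \<ge> x0_thr r S b"
    and moment: "(\<integral>\<^sup>+ s. ennreal (\<bar>fst s - x\<bar> powr p) \<partial>measure_pmf P) \<le> ennreal Cp"
    and rp: "max r 0 \<le> p"
  defines "q \<equiv> max r 0" and "K \<equiv> f_r_growth_const r S b"
  shows "(\<integral>\<^sup>+ s. ennreal (\<bar>f_r r S b (fst s) (snd s) - f_r r S b x i\<bar>
              * indicator {s. \<bar>fst s - x\<bar> > x powr \<zeta>} s) \<partial>measure_pmf P)
    \<le> ennreal ((K * (2 powr q + 1) * max Cp 0) * x powr (q - \<zeta> * p)
                + (K * 2 powr q * max Cp 0) * x powr (\<zeta> * (q - p)))"
proof -
  define c where "c = K * (2 powr q + 1) * x powr (q - \<zeta> * p) + K * 2 powr q * x powr (\<zeta> * (q - p))"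
  have K: "K \<ge> 0" using f_r_growth_const_nonneg[OF fin] i by (auto simp: K_def)
  then have c: "c \<ge> 0" by (simp add: c_def)
  have pointwise: "ennreal (\<bar>f_r r S b (fst s) (snd s) - f_r r S b x i\<bar>
        * indicator {s. \<bar>fst s - x\<bar> > x powr \<zeta>} s) \<le> ennreal (c * \<bar>fst s - x\<bar> powr p)"
    if s: "s \<in> set_pmf P" for s
  proof (cases "\<bar>fst s - x\<bar> > x powr \<zeta>")
    case True
    have "\<bar>f_r r S b (fst s) (snd s) - f_r r S b x i\<bar> \<le> c * \<bar>fst s - x\<bar> powr p"
      unfolding c_def
      by (rule abs_diff_le_of_large_jump[OF x x0_thr_ge_1 refl True _ _ K])
         (use fin i supp s rp in \<open>auto simp: q_def K_def intro: abs_f_r_le\<close>)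
    then show ?thesis using True by (intro ennreal_leI) simp
  qed simp
  have "(\<integral>\<^sup>+ s. ennreal (\<bar>f_r r S b (fst s) (snd s) - f_r r S b x i\<bar>
              * indicator {s. \<bar>fst s - x\<bar> > x powr \<zeta>} s) \<partial>measure_pmf P)
      \<le> (\<integral>\<^sup>+ s. ennreal (c * \<bar>fst s - x\<bar> powr p) \<partial>measure_pmf P)"
    using pointwise by (intro nn_integral_mono_AE) (simp add: AE_measure_pmf_iff)
  also have "\<dots> = ennreal c * (\<integral>\<^sup>+ s. ennreal (\<bar>fst s - x\<bar> powr p) \<partial>measure_pmf P)"
    using c by (simp add: ennreal_mult nn_integral_cmult)
  \<comment> \<open>\<open>ennreal\<close> truncates at \<open>0\<close>, so a negative \<open>Cp\<close> acts as \<open>0\<close>\<close>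
  also have "\<dots> \<le> ennreal c * ennreal (max Cp 0)"
    using moment by (intro mult_left_mono) (auto simp: max_def ennreal_neg)
  also have "\<dots> = ennreal (c * max Cp 0)"
    using c by (simp add: ennreal_mult)
  finally show ?thesis by (simp add: c_def algebra_simps)
qed

theorem lemma3p7:
  fixes \<Sigma> :: "(real \<times> 'a) set" and S :: "'a set"
    and P :: "real \<times> 'a \<Rightarrow> (real \<times> 'a) pmf"
    and p Cp r :: real and b :: "'a \<Rightarrow> real"
  assumes lf: "locally_finite_state_space \<Sigma> S"
    and S_ne: "S \<noteq> {}"
    and closed: "\<And>s. s \<in> \<Sigma> \<Longrightarrow> set_pmf (P s) \<subseteq> \<Sigma>"
    and p: "p > 2"
    and moment: "\<And>x i. (x, i) \<in> \<Sigma> \<Longrightarrow>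
        (\<integral>\<^sup>+ s. ennreal (\<bar>fst s - x\<bar> powr p) \<partial>measure_pmf (P (x, i))) \<le> ennreal Cp"
    and r: "2 - p < r" "r \<le> p"
  shows "\<exists>\<zeta>. 0 < \<zeta> \<and> \<zeta> < 1 \<and>
    (\<forall>\<epsilon>>0. \<exists>x1. \<forall>x i. (x, i) \<in> \<Sigma> \<and> x \<ge> x1 \<longrightarrow>
       (\<integral>\<^sup>+ s. ennreal (\<bar>f_r r S b (fst s) (snd s) - f_r r S b x i\<bar>
              * indicator {s. \<bar>fst s - x\<bar> > x powr \<zeta>} s) \<partial>measure_pmf (P (x, i)))
         \<le> ennreal (\<epsilon> * x powr (r - 2)))"
proof -
  have fin: "finite S" and \<Sigma>: "\<Sigma> \<subseteq> {0..} \<times> S"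
    using lf unfolding locally_finite_state_space_def by auto
  have rp: "max r 0 \<le> p" using p r by simp
  obtain \<zeta> where \<zeta>: "0 < \<zeta>" "\<zeta> < 1" "max r 0 - \<zeta> * p < r - 2" "\<zeta> * (max r 0 - p) < r - 2"
  proof (rule exists_jump_exponent[THEN exE])
    show "max r 0 + 2 - r < p" using p r by (simp split: split_max)
  qed (use p in auto)
  let ?I = "\<lambda>x i. \<integral>\<^sup>+ s. ennreal (\<bar>f_r r S b (fst s) (snd s) - f_r r S b x i\<bar>
              * indicator {s. \<bar>fst s - x\<bar> > x powr \<zeta>} s) \<partial>measure_pmf (P (x, i))"
  let ?K = "f_r_growth_const r S b"
  have "?I x i \<le> ennreal ((?K * (2 powr max r 0 + 1) * max Cp 0) * x powr (max r 0 - \<zeta> * p)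
                         + (?K * 2 powr max r 0 * max Cp 0) * x powr (\<zeta> * (max r 0 - p)))"
    if xi: "(x, i) \<in> \<Sigma>" and x: "x \<ge> x0_thr r S b" for x i
  proof (rule large_jump_nn_integral_le[OF fin _ _ x moment[OF xi] rp])
    show "i \<in> S" "snd ` set_pmf (P (x, i)) \<subseteq> S" using xi \<Sigma> closed by fastforce+
  qed
  then have "\<forall>\<epsilon>>0. \<exists>x1. \<forall>x i. (x, i) \<in> \<Sigma> \<and> x \<ge> x1 \<longrightarrow> ?I x i \<le> ennreal (\<epsilon> * x powr (r - 2))"
    by (rule eventually_ennreal_le_of_powr_bound[OF _ \<zeta>(3,4)])
       (use f_r_growth_const_nonneg[OF fin S_ne] in auto)
  with \<zeta> show ?thesis by blast
qed

end
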